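(* Let $(G;+,\cdot)$ be a nonassociative right semiring and let $f, g \colon G^n \to G$ be affine functions, $f(x_1,\dots,x_n) = \sum_{i=1}^n a_ix_i + c$, $g(x_1,\dots,x_n) = \sum_{i=1}^n b_ix_i + d$. Assume that $f$ and $g$ are linear (with $c=d=0$), or that $(G;+,\cdot)$ is cancellative. Then $f \equiv g$ if and only if $\langle a_1,\dots,a_n\rangle = \langle b_1,\dots,b_n\rangle$ (as multisets) and $c = d$.
   Context: A nonassociative right semiring is an algebra $(G;+,\cdot)$ such that $(G;+)$ is a commutative monoid with neutral element $0$; $(G;\cdot)$ is a groupoid (not necessarily associative) with a right identity $1$ ($a\cdot 1 = a$); multiplication right-distributes over addition ($(a+b)c = ac + bc$); and $a \cdot 0 = 0$ for all $a$. It is cancellative if $a+b = a+c$ implies $b = c$. A function $f \colon G^n \to G$ is affine if $f(x_1,\dots,x_n) = a_1x_1+\dots+a_nx_n + c$ for some $a_i, c \in G$; linear if $c = 0$. $\langle \cdot \rangle$ denotes a multiset. Two functions $f, g \colon A^n \to B$ are equivalent, $f \equiv g$, if there is a permutation $\sigma$ of $\{1,\dots,n\}$ with $f(x_1,\dots,x_n) = g(x_{\sigma(1)},\dots,x_{\sigma(n)})$ for all $(x_1,\dots,x_n)\in A^n$. *)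

theory Defs
  imports Main "HOL-Library.Multiset" "HOL-Combinatorics.Permutations"
begin

definition nonassoc_right_semiring ::
  "('a \<Rightarrow> 'a \<Rightarrow> 'a) \<Rightarrow> ('a \<Rightarrow> 'a \<Rightarrow> 'a) \<Rightarrow> 'a \<Rightarrow> 'a \<Rightarrow> bool" where
  "nonassoc_right_semiring pl tm z u \<longleftrightarrow>
     (\<forall>a b c. pl (pl a b) c = pl a (pl b c)) \<and>
     (\<forall>a b. pl a b = pl b a) \<and>
     (\<forall>a. pl a z = a) \<and>
     (\<forall>a. tm a u = a) \<and>
     (\<forall>a b c. tm (pl a b) c = pl (tm a c) (tm b c)) \<and>
     (\<forall>a. tm a z = z)"

definition cancellative_add :: "('a \<Rightarrow> 'a \<Rightarrow> 'a) \<Rightarrow> bool" where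
  "cancellative_add pl \<longleftrightarrow> (\<forall>a b c. pl a b = pl a c \<longrightarrow> b = c)"

fun gsum :: "('a \<Rightarrow> 'a \<Rightarrow> 'a) \<Rightarrow> 'a \<Rightarrow> nat \<Rightarrow> (nat \<Rightarrow> 'a) \<Rightarrow> 'a" where
  "gsum pl z 0 h = z"
| "gsum pl z (Suc n) h = pl (gsum pl z n h) (h n)"

text \<open>The affine function x \<mapsto> a_0 x_0 + ... + a_{n-1} x_{n-1} + c; a tuple of G^n is
 represented by a function nat \<Rightarrow> 'a of which only the first n entries matter.\<close>
definition affine_fun ::
  "('a \<Rightarrow> 'a \<Rightarrow> 'a) \<Rightarrow> ('a \<Rightarrow> 'a \<Rightarrow> 'a) \<Rightarrow> 'a \<Rightarrow> nat \<Rightarrow> (nat \<Rightarrow> 'a) \<Rightarrow> 'a \<Rightarrow> (nat \<Rightarrow> 'a) \<Rightarrow> 'a" where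
  "affine_fun pl tm z n a c x = pl (gsum pl z n (\<lambda>i. tm (a i) (x i))) c"

definition fun_equiv :: "nat \<Rightarrow> ((nat \<Rightarrow> 'a) \<Rightarrow> 'b) \<Rightarrow> ((nat \<Rightarrow> 'a) \<Rightarrow> 'b) \<Rightarrow> bool" where
  "fun_equiv n f g \<longleftrightarrow> (\<exists>\<sigma>. \<sigma> permutes {..<n} \<and> (\<forall>x. f x = g (\<lambda>i. x (\<sigma> i))))"

end

theory Submission
  imports Defs
begin

text \<open>Evaluating an affine function at the zero vector recovers its constant term, and at the
  j-th unit vector gives \<open>a\<^sub>j + c\<close>; this determines the coefficients up to the permutation.
  Conversely, permuting the coefficients is absorbed by permuting the arguments, since addition
  is a commutative monoid.\<close>

lemma nonassoc_right_semiring_comm_monoid: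
  assumes "nonassoc_right_semiring pl tm z u"
  shows "comm_monoid pl z"
  using assms unfolding nonassoc_right_semiring_def by unfold_locales auto

lemma gsum_eq_comm_monoid_set_F:
  assumes "comm_monoid pl z"
  shows "gsum pl z n h = comm_monoid_set.F pl z h {..<n}"
proof -
  interpret comm_monoid_set pl z by (rule comm_monoid_set.intro[OF assms])
  show ?thesis
    by (induction n) (simp_all add: lessThan_Suc insert commute)
qed

lemma affine_fun_zero_vector:
  assumes "nonassoc_right_semiring pl tm z u"
  shows "affine_fun pl tm z n a c (\<lambda>_. z) = c"
proof -
  have cm: "comm_monoid pl z" by (rule nonassoc_right_semiring_comm_monoid[OF assms])
  interpret comm_monoid_set pl z by (rule comm_monoid_set.intro[OF cm])
  have "\<And>x. tm x z = z" "\<And>x. pl z x = x"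
    using assms unfolding nonassoc_right_semiring_def by auto
  then show ?thesis
    unfolding affine_fun_def gsum_eq_comm_monoid_set_F[OF cm] by (simp add: neutral)
qed

lemma affine_fun_unit_vector:
  assumes "nonassoc_right_semiring pl tm z u" and "j < n"
  shows "affine_fun pl tm z n a c (\<lambda>i. if i = j then u else z) = pl (a j) c"
proof -
  have cm: "comm_monoid pl z" by (rule nonassoc_right_semiring_comm_monoid[OF assms(1)])
  interpret comm_monoid_set pl z by (rule comm_monoid_set.intro[OF cm])
  have S: "\<And>x. tm x z = z" "\<And>x. tm x u = x" "\<And>x. pl x z = x"
    using assms(1) unfolding nonassoc_right_semiring_def by auto
  let ?h = "\<lambda>i. tm (a i) (if i = j then u else z)"
  have "F ?h {..<n} = pl (?h j) (F ?h ({..<n} - {j}))"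
    using remove[of "{..<n}" j] assms(2) by simp
  also have "F ?h ({..<n} - {j}) = z"
    by (rule neutral) (simp add: S)
  finally show ?thesis
    unfolding affine_fun_def gsum_eq_comm_monoid_set_F[OF cm] by (simp add: S)
qed

lemma affine_fun_permute_coeffs:
  assumes "comm_monoid pl z" and "p permutes {..<n}" and "\<And>i. i < n \<Longrightarrow> a i = b (p i)"
  shows "affine_fun pl tm z n a c x = affine_fun pl tm z n b c (\<lambda>i. x (inv p i))"
proof -
  interpret comm_monoid_set pl z by (rule comm_monoid_set.intro[OF assms(1)])
  have "F (\<lambda>i. tm (b i) (x (inv p i))) {..<n} = F (\<lambda>j. tm (b (p j)) (x (inv p (p j)))) {..<n}"
    using reindex_bij_betw[OF permutes_imp_bij[OF assms(2)], of "\<lambda>i. tm (b i) (x (inv p i))"]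
    by simp
  also have "\<dots> = F (\<lambda>j. tm (a j) (x j)) {..<n}"
    by (rule cong) (auto simp: assms(3) permutes_inverses(2)[OF assms(2)])
  finally show ?thesis
    unfolding affine_fun_def gsum_eq_comm_monoid_set_F[OF assms(1)] by simp
qed

lemma mset_map_upt_permutes:
  assumes "\<sigma> permutes {..<n}"
  shows "mset (map (\<lambda>i. a (\<sigma> i)) [0..<n]) = mset (map a [0..<n])"
proof -
  have "mset (map (\<lambda>i. a (\<sigma> i)) [0..<n]) = image_mset a (image_mset \<sigma> (mset_set {..<n}))"
    by (simp add: atLeast_upt multiset.map_comp comp_def)
  also have "\<dots> = image_mset a (mset_set (\<sigma> ` {..<n}))"
    using assms by (simp add: image_mset_mset_set permutes_inj_on)
  also have "\<dots> = mset (map a [0..<n])"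
    using assms by (simp add: permutes_image atLeast_upt)
  finally show ?thesis .
qed

lemma mset_map_upt_eq_obtains_permutes:
  assumes "mset (map a [0..<n]) = mset (map b [0..<n])"
  obtains p where "p permutes {..<n}" and "\<And>i. i < n \<Longrightarrow> a i = b (p i)"
proof -
  obtain p where "p permutes {..<length (map b [0..<n])}"
    and pl: "permute_list p (map b [0..<n]) = map a [0..<n]"
    by (rule mset_eq_permutation[OF assms])
  then have p: "p permutes {..<n}" by simp
  have "a i = b (p i)" if "i < n" for i
  proof -
    have "p i < n" using p that by (meson lessThan_iff permutes_in_image)
    have "a i = permute_list p (map b [0..<n]) ! i" using pl that by simp
    also have "\<dots> = b (p i)" using that p \<open>p i < n\<close> by (simp add: permute_list_nth)
    finally show ?thesis .
  qed
  then show ?thesis using p that by blast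
qed

lemma add_right_cancel_zero_or_cancellative:
  assumes "nonassoc_right_semiring pl tm z u" and "c = z \<or> cancellative_add pl"
    and "pl x c = pl y c"
  shows "x = y"
proof -
  have comm: "\<And>v w. pl v w = pl w v" and right_neutral: "\<And>v. pl v z = v"
    using assms(1) unfolding nonassoc_right_semiring_def by blast+
  show ?thesis
  proof (cases "cancellative_add pl")
    case True
    have "pl c x = pl c y" using assms(3) comm[of c] by simp
    with True show ?thesis unfolding cancellative_add_def by blast
  next
    case False
    with assms(2,3) show ?thesis by (simp add: right_neutral)
  qed
qed

theorem mainTheorem10:
  fixes pl tm :: "'a \<Rightarrow> 'a \<Rightarrow> 'a" and z u :: 'a
    and n :: nat and a b :: "nat \<Rightarrow> 'a" and c d :: 'a
  assumes "nonassoc_right_semiring pl tm z u"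
    and "(c = z \<and> d = z) \<or> cancellative_add pl"
  shows "fun_equiv n (affine_fun pl tm z n a c) (affine_fun pl tm z n b d)
     \<longleftrightarrow> (mset (map a [0..<n]) = mset (map b [0..<n]) \<and> c = d)"
proof
  assume "fun_equiv n (affine_fun pl tm z n a c) (affine_fun pl tm z n b d)"
  then obtain \<sigma> where \<sigma>: "\<sigma> permutes {..<n}"
    and eq: "\<And>x. affine_fun pl tm z n a c x = affine_fun pl tm z n b d (\<lambda>i. x (\<sigma> i))"
    unfolding fun_equiv_def by blast
  have "c = d"
    using eq[of "\<lambda>_. z"] by (simp add: affine_fun_zero_vector[OF assms(1)])
  have "b k = a (\<sigma> k)" if "k < n" for k
  proof (rule add_right_cancel_zero_or_cancellative[OF assms(1)])
    show "c = z \<or> cancellative_add pl" using assms(2) by blast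
    have "\<sigma> k < n" using \<sigma> that by (meson lessThan_iff permutes_in_image)
    have "(\<lambda>i. if \<sigma> i = \<sigma> k then u else z) = (\<lambda>i. if i = k then u else z)"
      using permutes_inj[OF \<sigma>] by (simp add: inj_eq)
    then show "pl (b k) c = pl (a (\<sigma> k)) c"
      using eq[of "\<lambda>i. if i = \<sigma> k then u else z"] \<open>c = d\<close>
        affine_fun_unit_vector[OF assms(1) \<open>\<sigma> k < n\<close>, of a c]
        affine_fun_unit_vector[OF assms(1) that, of b d]
      by simp
  qed
  then have "map b [0..<n] = map (\<lambda>i. a (\<sigma> i)) [0..<n]"
    by (intro map_cong) auto
  with \<open>c = d\<close> show "mset (map a [0..<n]) = mset (map b [0..<n]) \<and> c = d"
    using mset_map_upt_permutes[OF \<sigma>, of a] by (simp only:)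
next
  assume "mset (map a [0..<n]) = mset (map b [0..<n]) \<and> c = d"
  moreover obtain p where p: "p permutes {..<n}" and "\<And>i. i < n \<Longrightarrow> a i = b (p i)"
    using calculation mset_map_upt_eq_obtains_permutes by blast
  ultimately have "\<forall>x. affine_fun pl tm z n a c x = affine_fun pl tm z n b d (\<lambda>i. x (inv p i))"
    using affine_fun_permute_coeffs[OF nonassoc_right_semiring_comm_monoid[OF assms(1)] p]
    by simp
  then show "fun_equiv n (affine_fun pl tm z n a c) (affine_fun pl tm z n b d)"
    unfolding fun_equiv_def using permutes_inv[OF p] by blast
qed

end
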